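(* Let $r_0\approx 0.546302$ be the positive root of $r^2+2\cot(1)\,r-1=0$, and let $\alpha_1,\alpha_2>0$ satisfy $\alpha_1-\alpha_2\ge e\,r_0$. Let $p$ be analytic in $\mathbb{D}$ with $p(0)=1$. If $$1+\alpha_1 zp'(z)+\alpha_2 z^2p''(z)\prec \frac{2}{1+e^{-z}},$$ then $p(z)\prec e^z$.
   Context: $\mathbb{D}$ is the open unit disk. For $g,h$ analytic in $\mathbb{D}$, $g\prec h$ means there is an analytic $w:\mathbb{D}\to\mathbb{D}$ with $w(0)=0$ and $g=h\circ w$. *)

theory Defs
  imports "HOL-Complex_Analysis.Complex_Analysis"
begin

definition subordinate :: "(complex \<Rightarrow> complex) \<Rightarrow> (complex \<Rightarrow> complex) \<Rightarrow> bool" where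
  "subordinate g h \<longleftrightarrow>
     (\<exists>w. w holomorphic_on ball 0 1 \<and> w ` ball 0 1 \<subseteq> ball 0 1 \<and> w 0 = 0 \<and>
          (\<forall>z\<in>ball 0 1. g z = h (w z)))"

end

theory Submission
  imports Defs
begin

text \<open>The hypothesis says that H(z) = \<alpha>1 z p'(z) + \<alpha>2 z^2 p''(z) equals tanh(w(z)/2) for a
Schwarz function w. On the unit disk |tanh(u/2)| < 4/5, so Schwarz's lemma gives |H(z)| \<le> 4|z|/5.
With \<theta> = z d/dz and \<beta> = \<alpha>1/\<alpha>2 - 1 \<ge> 0 the operator factors as H = \<alpha>2 \<theta>(\<theta> + \<beta>)(p - 1), and each
first-order factor is inverted by integrating along the ray [0, z] with the integrating factor
t^\<beta>, which yields |p(z) - 1| \<le> 4|z|/(5 \<alpha>1). Since \<alpha>1 \<ge> e r0 > 13/10, p stays within 8/13 < 1 - 1/e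
of 1, and then log p is a Schwarz function with p = exp \<circ> log p.\<close>

lemma sin_one_ge: "sin (1::real) \<ge> 5/6"
proof -
  have "\<bar>sin (1::real) - (\<Sum>m<3. sin_coeff m * 1 ^ m)\<bar> \<le> inverse (fact 3) * \<bar>1\<bar> ^ 3"
    by (rule Maclaurin_sin_bound)
  then show ?thesis by (simp add: eval_nat_numeral sin_coeff_def fact_numeral)
qed

lemma cos_one_le: "cos (1::real) \<le> 13/24"
proof -
  obtain t :: real where
    "cos 1 = (\<Sum>m<4. cos_coeff m * 1 ^ m) + (cos (t + 1/2 * real 4 * pi) / fact 4) * 1 ^ 4"
    using Maclaurin_cos_expansion[of "1::real" 4] by blast
  moreover have "(\<Sum>m<4. cos_coeff m * (1::real) ^ m) = 1/2"
    by (simp add: lessThan_nat_numeral cos_coeff_def fact_numeral)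
  ultimately show ?thesis by (simp add: fact_numeral) (use cos_le_one[of t] in linarith)
qed

lemma cot_one_le: "cot (1::real) \<le> 3/4"
  using sin_one_ge cos_one_le by (simp add: cot_def divide_simps)

lemma exp_one_ge: "exp (1::real) \<ge> 13/5"
proof -
  have "1 + 1/2 + (1/2)\<^sup>2/2 \<le> exp (1/2::real)" by (rule exp_lower_Taylor_quadratic) simp
  then have half: "13/8 \<le> exp (1/2::real)" by (simp add: power2_eq_square)
  have "exp (1::real) = exp (1/2) * exp (1/2)" by (simp flip: exp_add)
  also have "\<dots> \<ge> 13/8 * (13/8)" using half by (intro mult_mono) auto
  finally show ?thesis by simp
qed

lemma cot_one_root_ge_half:
  fixes r :: real assumes "r > 0" "r\<^sup>2 + 2 * cot 1 * r - 1 = 0" shows "r \<ge> 1/2"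
proof (rule ccontr)
  assume "\<not> r \<ge> 1/2"
  then have "r\<^sup>2 < 1/4" using power_strict_mono[of r "1/2" 2] assms(1) by (simp add: power_divide)
  moreover have "cot 1 * r \<le> 3/4 * r" using cot_one_le assms(1) by (intro mult_right_mono) auto
  ultimately show False using assms \<open>\<not> r \<ge> 1/2\<close> by linarith
qed

lemma cos_ge_half:
  fixes x :: real assumes "\<bar>x\<bar> \<le> 1" shows "cos x \<ge> 1/2"
proof -
  have "\<bar>sin (x/2)\<bar> \<le> 1/2" using abs_sin_x_le_abs_x[of "x/2"] assms by linarith
  then have "(sin (x/2))\<^sup>2 \<le> 1/4"
    using power_mono[of "\<bar>sin (x/2)\<bar>" "1/2" 2] by (simp add: power_divide)
  then show ?thesis using cos_double_sin[of "x/2"] by simp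
qed

lemma norm_one_minus_exp_lt:
  fixes v :: complex assumes "\<bar>Re v\<bar> < 1" "\<bar>Im v\<bar> < 1"
  shows "cmod (1 - exp v) < 4/5 * cmod (1 + exp v)"
proof -
  define a where "a = exp (Re v)"
  define c where "c = cos (Im v)"
  have "exp (-1) \<le> a" "a \<le> exp 1" using assms(1) by (auto simp: a_def)
  moreover have "exp (-1) \<ge> (1/3::real)"
    using exp_le by (simp add: exp_minus field_simps)
  ultimately have a: "1/3 \<le> a" "a \<le> 3" using exp_le by linarith+
  have c: "c \<ge> 1/2" using cos_ge_half assms(2) by (simp add: c_def)
  have norm_sq: "(cmod (1 + s * exp v))\<^sup>2 = 1 + 2 * s * a * c + a\<^sup>2" if "s\<^sup>2 = 1" for s :: real
  proof -
    have "(cmod (1 + s * exp v))\<^sup>2 = (1 + s * a * c)\<^sup>2 + (s * a * sin (Im v))\<^sup>2"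
      by (simp add: cmod_power2 Re_exp Im_exp a_def c_def mult.assoc)
    also have "\<dots> = 1 + 2 * s * a * c + a\<^sup>2"
      using sin_cos_squared_add[of "Im v"] that unfolding c_def by algebra
    finally show ?thesis .
  qed
  have "(3 * a - 1) * (a - 3) \<le> 0" using a by (intro mult_nonneg_nonpos) auto
  then have "9 + 9 * a\<^sup>2 \<le> 30 * a" by (simp add: algebra_simps power2_eq_square)
  moreover have "41 * a \<le> 82 * a * c" using a c by simp
  ultimately have "9 + 9 * a\<^sup>2 < 82 * a * c" using a by linarith
  then have "(cmod (1 - exp v))\<^sup>2 < (4/5 * cmod (1 + exp v))\<^sup>2"
    using norm_sq[of 1] norm_sq[of "-1"] by (simp add: power_mult_distrib power2_eq_square)
  then show ?thesis by (rule power_less_imp_less_base) simp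
qed

lemma norm_logistic_minus_one_lt:
  fixes u :: complex assumes "cmod u < 1"
  shows "cmod (2 / (1 + exp (-u)) - 1) < 4/5"
proof -
  have "\<bar>Re (-u)\<bar> < 1" "\<bar>Im (-u)\<bar> < 1"
    using assms abs_Re_le_cmod[of u] abs_Im_le_cmod[of u] by auto
  then have lt: "cmod (1 - exp (-u)) < 4/5 * cmod (1 + exp (-u))" by (rule norm_one_minus_exp_lt)
  moreover have pos: "cmod (1 + exp (-u)) > 0" using lt norm_ge_zero[of "1 - exp (-u)"] by linarith
  ultimately have "cmod ((1 - exp (-u)) / (1 + exp (-u))) < 4/5" by (simp add: norm_divide divide_simps)
  moreover have "2 / (1 + exp (-u)) - 1 = (1 - exp (-u)) / (1 + exp (-u))"
    using pos by (simp add: field_simps)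
  ultimately show ?thesis by simp
qed

lemma norm_sub_one_le_if_subordinate_logistic:
  fixes g :: "complex \<Rightarrow> complex"
  assumes hol: "g holomorphic_on ball 0 1" and sub: "subordinate g (\<lambda>z. 2 / (1 + exp (- z)))"
    and z: "z \<in> ball 0 1"
  shows "cmod (g z - 1) \<le> 4/5 * cmod z"
proof -
  obtain w where w: "w ` ball 0 1 \<subseteq> ball 0 1" "w 0 = 0"
    and g: "\<And>z. z \<in> ball 0 1 \<Longrightarrow> g z = 2 / (1 + exp (- w z))"
    using sub unfolding subordinate_def by blast
  have "cmod (5/4 * (g z - 1)) \<le> cmod z"
  proof (rule Schwarz_Lemma(1))
    show "(\<lambda>z. 5/4 * (g z - 1)) holomorphic_on ball 0 1" using hol by (intro holomorphic_intros)
    show "5/4 * (g 0 - 1) = 0" using g[of 0] w(2) by simp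
    show "cmod (5/4 * (g u - 1)) < 1" if "cmod u < 1" for u
    proof -
      have "w u \<in> ball 0 1" using w(1) that by (auto simp: image_subset_iff)
      then have "cmod (g u - 1) < 4/5"
        using norm_logistic_minus_one_lt[of "w u"] g[of u] that by simp
      then show ?thesis unfolding norm_mult by simp
    qed
  qed (use z in simp)
  then show ?thesis unfolding norm_mult by simp
qed

lemma has_vector_derivative_powr_radial:
  fixes g :: "complex \<Rightarrow> complex" and b t :: real
  assumes dg: "(g has_field_derivative g') (at (of_real t * z))" and t: "t > 0"
  shows "((\<lambda>t. of_real (t powr b) * g (of_real t * z)) has_vector_derivative
           of_real (t powr (b - 1)) * (of_real t * z * g' + of_real b * g (of_real t * z))) (at t)"
proof -
  have "((\<lambda>t. complex_of_real t * z) has_vector_derivative z) (at t)"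
    using has_vector_derivative_real_field[of "\<lambda>w. w * z" z t UNIV]
    by (auto intro!: derivative_eq_intros)
  from field_vector_diff_chain_at[OF this dg]
  have "((\<lambda>t. g (of_real t * z)) has_vector_derivative z * g') (at t)" by (simp add: o_def)
  moreover have "((\<lambda>t. complex_of_real (t powr b)) has_vector_derivative
                  of_real (b * t powr (b - 1))) (at t)"
    by (rule has_vector_derivative_of_real) (rule has_real_derivative_powr[OF t])
  ultimately have "((\<lambda>t. of_real (t powr b) * g (of_real t * z)) has_vector_derivative
      of_real (t powr b) * (z * g') + of_real (b * t powr (b - 1)) * g (of_real t * z)) (at t)"
    by (rule has_vector_derivative_mult[rotated])
  moreover have "t powr b = t powr (b - 1) * t" using t by (simp add: powr_diff)
  ultimately show ?thesis by (simp add: algebra_simps)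
qed

text \<open>The Euler operator \<theta> + b with \<theta> = z d/dz is inverted by
(\<theta> + b)^-1 h (z) = \<integral> t^(b-1) h(tz) dt over [0,1], which contracts a bound N|z| by the factor 1/(b+1).
For b = 0 the junk value 0 powr 0 = 0 is harmless because g 0 = 0.\<close>
lemma norm_le_if_norm_Euler_op_le:
  fixes g :: "complex \<Rightarrow> complex" and b N :: real
  assumes hol: "g holomorphic_on ball 0 1" and g0: "g 0 = 0" and b: "b \<ge> 0"
    and bnd: "\<And>u. u \<in> ball 0 1 \<Longrightarrow> cmod (u * deriv g u + of_real b * g u) \<le> N * cmod u"
    and z: "z \<in> ball 0 1"
  shows "cmod (g z) \<le> N * cmod z / (b + 1)"
proof -
  define \<phi> where "\<phi> = (\<lambda>t::real. of_real (t powr b) * g (of_real t * z))"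
  define \<phi>' where "\<phi>' = (\<lambda>t::real. of_real (t powr (b - 1)) *
        (of_real t * z * deriv g (of_real t * z) + of_real b * g (of_real t * z)))"
  have ray: "of_real t * z \<in> ball 0 1" if "t \<in> {0..1}" for t
  proof -
    have "cmod (of_real t * z) = \<bar>t\<bar> * cmod z" by (simp add: norm_mult)
    also have "\<dots> \<le> cmod z" using that by (auto intro: mult_left_le_one_le)
    finally show ?thesis using z by auto
  qed
  have cont_ray: "continuous_on {0..1} (\<lambda>t. g (complex_of_real t * z))"
    by (rule continuous_on_compose2[OF holomorphic_on_imp_continuous_on[OF hol]])
       (auto intro!: continuous_intros ray)
  have "continuous_on {0..1} \<phi>"
  proof (cases "b = 0")
    case True
    then have "\<phi> = (\<lambda>t. g (of_real t * z))" using g0 by (auto simp: \<phi>_def)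
    then show ?thesis using cont_ray by simp
  next
    case False
    have "continuous_on {0..1} (\<lambda>t::real. t powr b)"
      by (intro continuous_on_powr' continuous_on_id continuous_on_const) (use b False in auto)
    then show ?thesis
      unfolding \<phi>_def by (intro continuous_on_mult continuous_on_of_real cont_ray)
  qed
  moreover have "(\<phi> has_vector_derivative \<phi>' t) (at t)" if t: "t \<in> {0<..<1}" for t
    unfolding \<phi>_def \<phi>'_def using ray[of t] t
    by (intro has_vector_derivative_powr_radial holomorphic_derivI[OF hol]) auto
  ultimately have "(\<phi>' has_integral (\<phi> 1 - \<phi> 0)) {0..1}"
    by (intro fundamental_theorem_of_calculus_interior) auto
  then have ftc: "(\<phi>' has_integral g z) {0..1}" using g0 by (simp add: \<phi>_def)
  have pint: "((\<lambda>t. N * cmod z * t powr b) has_integral (N * cmod z / (b + 1))) {0..1}"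
    using has_integral_mult_right[OF has_integral_powr_from_0[of b 1]] b by simp
  have "cmod (\<phi>' t) \<le> N * cmod z * t powr b" if t: "t \<in> {0..1}" for t
  proof (cases "t = 0")
    case False
    then have t0: "t > 0" using t by auto
    have "cmod (\<phi>' t) = t powr (b - 1) *
            cmod (of_real t * z * deriv g (of_real t * z) + of_real b * g (of_real t * z))"
      by (simp add: \<phi>'_def norm_mult)
    also have "\<dots> \<le> t powr (b - 1) * (N * cmod (of_real t * z))"
      by (rule mult_left_mono[OF bnd[OF ray[OF t]]]) simp
    also have "\<dots> = N * cmod z * t powr b" using t0 by (simp add: norm_mult powr_diff)
    finally show ?thesis .
  qed (simp add: \<phi>'_def)
  then have "cmod (integral {0..1} \<phi>') \<le> integral {0..1} (\<lambda>t. N * cmod z * t powr b)"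
    using ftc pint by (intro integral_norm_bound_integral) blast+
  then show ?thesis using integral_unique[OF ftc] integral_unique[OF pint] by simp
qed

lemma norm_sub_le_if_second_order_bound:
  fixes p :: "complex \<Rightarrow> complex" and \<alpha>1 \<alpha>2 N :: real
  assumes hol: "p holomorphic_on ball 0 1" and \<alpha>: "0 < \<alpha>2" "\<alpha>2 \<le> \<alpha>1"
    and bnd: "\<And>u. u \<in> ball 0 1 \<Longrightarrow>
      cmod (of_real \<alpha>1 * u * deriv p u + of_real \<alpha>2 * u\<^sup>2 * deriv (deriv p) u) \<le> N * cmod u"
    and z: "z \<in> ball 0 1"
  shows "cmod (p z - p 0) \<le> N * cmod z / \<alpha>1"
proof -
  define \<beta> where "\<beta> = \<alpha>1 / \<alpha>2 - 1"
  have \<beta>: "\<beta> \<ge> 0" "\<alpha>1 = \<alpha>2 * (\<beta> + 1)" using \<alpha> by (simp_all add: \<beta>_def field_simps)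
  define f where "f = (\<lambda>z. p z - p 0)"
  define v where "v = (\<lambda>z. z * deriv p z + of_real \<beta> * f z)"
  have hol': "deriv p holomorphic_on ball 0 1" by (rule holomorphic_deriv[OF hol]) auto
  have dp: "(p has_field_derivative deriv p u) (at u)"
    and dp': "(deriv p has_field_derivative deriv (deriv p) u) (at u)" if "u \<in> ball 0 1" for u
    using that by (auto intro!: holomorphic_derivI[OF hol] holomorphic_derivI[OF hol'])
  have df: "deriv f u = deriv p u" if "u \<in> ball 0 1" for u
    unfolding f_def by (rule DERIV_imp_deriv) (auto intro!: derivative_eq_intros dp[OF that])
  have "cmod (v u) \<le> N / \<alpha>2 * cmod u" if u: "u \<in> ball 0 1" for u
  proof -
    have Euler_v: "cmod (w * deriv v w) \<le> N / \<alpha>2 * cmod w" if w: "w \<in> ball 0 1" for w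
    proof -
      have "(v has_field_derivative deriv p w + w * deriv (deriv p) w + of_real \<beta> * deriv p w) (at w)"
        unfolding v_def f_def by (auto intro!: derivative_eq_intros dp[OF w] dp'[OF w])
      then have "w * deriv v w = (of_real \<alpha>1 * w * deriv p w
                   + of_real \<alpha>2 * w\<^sup>2 * deriv (deriv p) w) / of_real \<alpha>2"
        using \<alpha> by (simp add: DERIV_imp_deriv \<beta>(2) field_simps power2_eq_square)
      then show ?thesis using bnd[OF w] \<alpha> by (simp add: norm_divide divide_right_mono)
    qed
    have "v holomorphic_on ball 0 1"
      unfolding v_def f_def using hol hol' by (intro holomorphic_intros) auto
    from norm_le_if_norm_Euler_op_le[OF this _ order_refl _ u, of "N / \<alpha>2"] Euler_v
    show ?thesis by (simp add: v_def f_def)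
  qed
  then have "cmod (f z) \<le> N / \<alpha>2 * cmod z / (\<beta> + 1)"
    using hol z df \<beta>(1)
    by (intro norm_le_if_norm_Euler_op_le) (auto simp: f_def v_def intro!: holomorphic_intros)
  then show ?thesis using \<alpha> by (simp add: f_def \<beta>(2) field_simps)
qed

lemma norm_Ln_one_plus_le:
  fixes z :: complex assumes z: "cmod z < 1"
  shows "cmod (Ln (1 + z)) \<le> - ln (1 - cmod z)"
proof -
  have sums: "(\<lambda>n. - ((- z) ^ n) / of_nat n) sums Ln (1 + z)"
    by (rule Ln_series') (use z in auto)
  have "(\<lambda>n. - (cmod z ^ n) / of_nat n) sums ln (1 + - cmod z)"
    using ln_series'[of "- cmod z"] z by simp
  then have norms: "(\<lambda>n. cmod (- ((- z) ^ n) / of_nat n)) sums (- ln (1 - cmod z))"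
    using sums_minus by (fastforce simp: norm_divide norm_power)
  have "cmod (Ln (1 + z)) = cmod (\<Sum>n. - ((- z) ^ n) / of_nat n)"
    using sums by (simp add: sums_iff)
  also have "\<dots> \<le> (\<Sum>n. cmod (- ((- z) ^ n) / of_nat n))"
    using norms by (intro summable_norm) (auto simp: sums_iff)
  also have "\<dots> = - ln (1 - cmod z)" using norms by (simp add: sums_iff)
  finally show ?thesis .
qed

lemma subordinate_exp_if_norm_sub_one_lt:
  fixes p :: "complex \<Rightarrow> complex"
  assumes hol: "p holomorphic_on ball 0 1" and p0: "p 0 = 1"
    and close: "\<And>z. z \<in> ball 0 1 \<Longrightarrow> cmod (p z - 1) < 1 - exp (-1)"
  shows "subordinate p exp"
proof -
  have near: "cmod (p z - 1) < 1" if "z \<in> ball 0 1" for z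
    using close[OF that] exp_gt_zero[of "-1"] by linarith
  have Re_pos: "Re (p z) > 0" if "z \<in> ball 0 1" for z
    using near[OF that] abs_Re_le_cmod[of "p z - 1"] by simp
  have "cmod (Ln (p z)) < 1" if z: "z \<in> ball 0 1" for z
  proof -
    have "cmod (Ln (p z)) \<le> - ln (1 - cmod (p z - 1))"
      using norm_Ln_one_plus_le[OF near[OF z]] by simp
    also have "\<dots> < 1"
    proof -
      have "ln (exp (-1)) < ln (1 - cmod (p z - 1))"
        using close[OF z] near[OF z] by (intro ln_less_cancel_iff[THEN iffD2]) auto
      then show ?thesis by simp
    qed
    finally show ?thesis .
  qed
  moreover have "(\<lambda>z. Ln (p z)) holomorphic_on ball 0 1"
  proof (intro holomorphic_on_Ln' hol)
    show "p z \<notin> \<real>\<^sub>\<le>\<^sub>0" if "z \<in> ball 0 1" for z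
      using Re_pos[OF that] by (auto simp: complex_nonpos_Reals_iff)
  qed
  moreover have "p z = exp (Ln (p z))" if "z \<in> ball 0 1" for z
  proof -
    have "p z \<noteq> 0" using Re_pos[OF that] by auto
    then show ?thesis by (simp add: exp_Ln)
  qed
  ultimately show ?thesis
    unfolding subordinate_def using p0 by (intro exI[of _ "\<lambda>z. Ln (p z)"]) auto
qed

theorem theorem4p5:
  fixes p :: "complex \<Rightarrow> complex" and r0 \<alpha>1 \<alpha>2 :: real
  assumes r0_pos: "r0 > 0"
    and r0_root: "r0 ^ 2 + 2 * cot 1 * r0 - 1 = 0"
    and a1: "\<alpha>1 > 0" and a2: "\<alpha>2 > 0"
    and a12: "\<alpha>1 - \<alpha>2 \<ge> exp 1 * r0"
    and hol: "p holomorphic_on ball 0 1"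
    and p0: "p 0 = 1"
    and sub: "subordinate
               (\<lambda>z. 1 + of_real \<alpha>1 * z * deriv p z + of_real \<alpha>2 * z ^ 2 * deriv (deriv p) z)
               (\<lambda>z. 2 / (1 + exp (- z)))"
  shows "subordinate p exp"
proof (rule subordinate_exp_if_norm_sub_one_lt[OF hol p0])
  have "exp 1 * r0 \<ge> 13/5 * (1/2)"
    using exp_one_ge cot_one_root_ge_half[OF r0_pos r0_root] by (intro mult_mono) auto
  then have \<alpha>1: "\<alpha>1 > 13/10" "\<alpha>2 \<le> \<alpha>1" using a12 a2 by linarith+
  have "deriv p holomorphic_on ball 0 1" by (rule holomorphic_deriv[OF hol]) auto
  then have "(\<lambda>z. 1 + of_real \<alpha>1 * z * deriv p z + of_real \<alpha>2 * z ^ 2 * deriv (deriv p) z)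
               holomorphic_on ball 0 1"
    using hol by (auto intro!: holomorphic_intros holomorphic_deriv)
  from norm_sub_one_le_if_subordinate_logistic[OF this sub]
  have bound: "cmod (p z - p 0) \<le> 4/5 * cmod z / \<alpha>1" if "z \<in> ball 0 1" for z
    using that a2 \<alpha>1(2) by (intro norm_sub_le_if_second_order_bound[OF hol]) auto
  fix z :: complex assume z: "z \<in> ball 0 1"
  have "4/5 * cmod z / \<alpha>1 < 8/13" using z \<alpha>1 by (simp add: field_simps)
  also have "8/13 \<le> 1 - exp (-1::real)" using exp_one_ge by (simp add: exp_minus field_simps)
  finally show "cmod (p z - 1) < 1 - exp (-1)"
    using bound[OF z] p0 by simp
qed

end
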